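(* Let $(W_n)$ be a standard numbering of the c.e. subsets of $\omega$, $V_n=\{(i,j)\mid\langle i,j\rangle\in W_n\}$ for a computable pairing bijection $\langle\cdot,\cdot\rangle$, and let $t$ be a computable function such that $V_{t(n)}$ is the transitive closure of $V_n$ for every $n$. Then the set $\{n\in\omega\mid V_{t(n)}\text{ is interpolable}\}$ is $\Pi^0_2$-complete; that is, deciding whether a given c.e. transitive relation on $\omega$ is interpolable is $\Pi^0_2$-complete.
   Context: A transitive relation $\prec$ on $\omega$ is interpolable if for every $y$ the initial segment $\{x\mid x\prec y\}$ is directed, i.e. non-empty and such that any two of its elements have a $\prec$-upper bound in it. *)

theory Defs
  imports Main
begin

definition rcomp :: "(nat list \<Rightarrow> nat option) \<Rightarrow> (nat list \<Rightarrow> nat option) list \<Rightarrow> nat list \<Rightarrow> nat option" where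
  "rcomp g hs xs = (if (\<forall>h\<in>set hs. h xs \<noteq> None) then g (map (\<lambda>h. the (h xs)) hs) else None)"

fun rprec :: "(nat list \<Rightarrow> nat option) \<Rightarrow> (nat list \<Rightarrow> nat option) \<Rightarrow> nat list \<Rightarrow> nat option" where
  "rprec g h [] = None"
| "rprec g h (0 # xs) = g xs"
| "rprec g h (Suc y # xs) = (case rprec g h (y # xs) of None \<Rightarrow> None | Some v \<Rightarrow> h (y # v # xs))"

definition rmu :: "(nat list \<Rightarrow> nat option) \<Rightarrow> nat list \<Rightarrow> nat option" where
  "rmu f xs = (if (\<exists>y. f (y # xs) = Some 0 \<and> (\<forall>z<y. f (z # xs) \<noteq> None))
     then Some (LEAST y. f (y # xs) = Some 0 \<and> (\<forall>z<y. f (z # xs) \<noteq> None)) else None)"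

text \<open>recfn n f: f is a partial recursive function of arity n (only its values on
  argument lists of length n are meaningful).\<close>
inductive recfn :: "nat \<Rightarrow> (nat list \<Rightarrow> nat option) \<Rightarrow> bool" where
  rzero: "recfn 0 (\<lambda>_. Some 0)"
| rsucc: "recfn 1 (\<lambda>xs. Some (Suc (hd xs)))"
| rproj: "i < n \<Longrightarrow> recfn n (\<lambda>xs. Some (xs ! i))"
| rcomp: "recfn (length hs) g \<Longrightarrow> (\<forall>h\<in>set hs. recfn n h) \<Longrightarrow> recfn n (rcomp g hs)"
| rprec: "recfn n g \<Longrightarrow> recfn (Suc (Suc n)) h \<Longrightarrow> recfn (Suc n) (rprec g h)"
| rmu: "recfn (Suc n) f \<Longrightarrow> recfn n (rmu f)"

definition computable1 :: "(nat \<Rightarrow> nat) \<Rightarrow> bool" where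
  "computable1 f \<longleftrightarrow> (\<exists>g. recfn 1 g \<and> (\<forall>x. g [x] = Some (f x)))"

definition computable2 :: "(nat \<Rightarrow> nat \<Rightarrow> nat) \<Rightarrow> bool" where
  "computable2 f \<longleftrightarrow> (\<exists>g. recfn 2 g \<and> (\<forall>x y. g [x, y] = Some (f x y)))"

definition ce_rel2 :: "(nat \<Rightarrow> nat \<Rightarrow> bool) \<Rightarrow> bool" where
  "ce_rel2 R \<longleftrightarrow> (\<exists>g. recfn 2 g \<and> (\<forall>x y. R x y \<longleftrightarrow> g [x, y] \<noteq> None))"

definition decidable3 :: "(nat \<Rightarrow> nat \<Rightarrow> nat \<Rightarrow> bool) \<Rightarrow> bool" where
  "decidable3 R \<longleftrightarrow> (\<exists>g. recfn 3 g \<and> (\<forall>x y z. g [x, y, z] = Some (if R x y z then 1 else 0)))"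

definition computable_numbering :: "(nat \<Rightarrow> nat set) \<Rightarrow> bool" where
  "computable_numbering U \<longleftrightarrow> ce_rel2 (\<lambda>n x. x \<in> U n)"

definition standard_numbering :: "(nat \<Rightarrow> nat set) \<Rightarrow> bool" where
  "standard_numbering W \<longleftrightarrow> computable_numbering W \<and>
     (\<forall>U. computable_numbering U \<longrightarrow> (\<exists>f. computable1 f \<and> (\<forall>n. U n = W (f n))))"

definition Pi02 :: "nat set \<Rightarrow> bool" where
  "Pi02 A \<longleftrightarrow> (\<exists>R. decidable3 R \<and> (\<forall>n. n \<in> A \<longleftrightarrow> (\<forall>x. \<exists>y. R n x y)))"

definition many_one_reducible :: "nat set \<Rightarrow> nat set \<Rightarrow> bool" where
  "many_one_reducible B A \<longleftrightarrow> (\<exists>f. computable1 f \<and> (\<forall>n. n \<in> B \<longleftrightarrow> f n \<in> A))"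

definition Pi02_complete :: "nat set \<Rightarrow> bool" where
  "Pi02_complete A \<longleftrightarrow> Pi02 A \<and> (\<forall>B. Pi02 B \<longrightarrow> many_one_reducible B A)"

definition interpolable :: "(nat \<times> nat) set \<Rightarrow> bool" where
  "interpolable R \<longleftrightarrow> (\<forall>y. {x. (x, y) \<in> R} \<noteq> {} \<and>
     (\<forall>a\<in>{x. (x, y) \<in> R}. \<forall>b\<in>{x. (x, y) \<in> R}. \<exists>c\<in>{x. (x, y) \<in> R}. (a, c) \<in> R \<and> (b, c) \<in> R))"

end

theory Submission
  imports Defs "HOL-Library.Nat_Bijection"
begin

text \<open>Kleene's normal form turns the standard numbering into an enumeration of all \<open>V n\<close> in
  decidable, monotone stages, uniformly in \<open>n\<close>.  In terms of stages, interpolability of \<open>V (t n)\<close>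
  says: for all \<open>y, a, b, s\<close> there are \<open>x, c\<close> and a stage \<open>s'\<close> by which \<open>x \<prec> y\<close> has appeared
  and, if \<open>a \<prec> y\<close> and \<open>b \<prec> y\<close> appeared by stage \<open>s\<close>, so have \<open>c \<prec> y\<close>, \<open>a \<prec> c\<close> and \<open>b \<prec> c\<close>.
  Coding the two quantifier blocks by Cantor pairing makes this a \<open>\<Pi>\<^sup>0\<^sub>2\<close> condition on \<open>n\<close>.

  For hardness, given \<open>B = {n. \<forall>x. \<exists>y. R n x y}\<close>, let \<open>2x+1 \<prec> 2x+1\<close> always and \<open>2x+1 \<prec> 2x\<close>
  iff \<open>\<exists>y. R n x y\<close>.  This relation is transitive, hence its own transitive closure, and c.e.
  uniformly in \<open>n\<close>, so it is \<open>V (t (f n))\<close> for a computable \<open>f\<close>.  Its initial segments are empty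
  or singletons \<open>{c}\<close> with \<open>c \<prec> c\<close>, and the segment of \<open>2x\<close> is empty exactly when
  \<open>\<exists>y. R n x y\<close> fails, so it is interpolable iff \<open>n \<in> B\<close>.\<close>

subsection \<open>Total recursive functions\<close>

definition rec_total :: "nat \<Rightarrow> (nat list \<Rightarrow> nat) \<Rightarrow> bool" where
  "rec_total k F \<longleftrightarrow> (\<exists>g. recfn k g \<and> (\<forall>xs. length xs = k \<longrightarrow> g xs = Some (F xs)))"

definition rec_decidable :: "nat \<Rightarrow> (nat list \<Rightarrow> bool) \<Rightarrow> bool" where
  "rec_decidable k P \<longleftrightarrow> rec_total k (\<lambda>xs. if P xs then 1 else 0)"

definition rec_total_list :: "nat \<Rightarrow> nat \<Rightarrow> (nat list \<Rightarrow> nat list) \<Rightarrow> bool" where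
  "rec_total_list k m L \<longleftrightarrow>
     (\<forall>xs. length xs = k \<longrightarrow> length (L xs) = m) \<and> (\<forall>i<m. rec_total k (\<lambda>xs. L xs ! i))"

lemma rec_total_cong:
  "rec_total k F \<Longrightarrow> (\<And>xs. length xs = k \<Longrightarrow> F xs = G xs) \<Longrightarrow> rec_total k G"
  unfolding rec_total_def by metis

lemma rec_decidable_cong:
  "rec_decidable k P \<Longrightarrow> (\<And>xs. length xs = k \<Longrightarrow> P xs = Q xs) \<Longrightarrow> rec_decidable k Q"
  unfolding rec_decidable_def by (erule rec_total_cong) auto

lemma rec_total_const: "rec_total k (\<lambda>_. c)"
proof (induction c)
  case 0
  have "recfn k (rcomp (\<lambda>_. Some 0) [])"
    using recfn.rzero by (intro recfn.rcomp) auto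
  then show ?case
    unfolding rec_total_def by (intro exI[of _ "rcomp (\<lambda>_. Some 0) []"]) (auto simp: rcomp_def)
next
  case (Suc c)
  then obtain g where g: "recfn k g" "\<forall>xs. length xs = k \<longrightarrow> g xs = Some c"
    unfolding rec_total_def by auto
  have "recfn k (rcomp (\<lambda>xs. Some (Suc (hd xs))) [g])"
    using g recfn.rsucc by (intro recfn.rcomp) auto
  then show ?case unfolding rec_total_def using g
    by (intro exI[of _ "rcomp (\<lambda>xs. Some (Suc (hd xs))) [g]"]) (auto simp: rcomp_def)
qed

lemma rec_total_proj: "i < k \<Longrightarrow> rec_total k (\<lambda>xs. xs ! i)"
  unfolding rec_total_def using recfn.rproj by blast

lemma rec_total_comp_list:
  assumes G: "rec_total m G" and L: "rec_total_list k m L"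
  shows "rec_total k (\<lambda>xs. G (L xs))"
proof -
  obtain g where g: "recfn m g" "\<forall>xs. length xs = m \<longrightarrow> g xs = Some (G xs)"
    using G unfolding rec_total_def by auto
  have "\<forall>i\<in>{..<m}. \<exists>h. recfn k h \<and> (\<forall>xs. length xs = k \<longrightarrow> h xs = Some (L xs ! i))"
    using L unfolding rec_total_list_def rec_total_def by auto
  then obtain hf where hf: "\<forall>i\<in>{..<m}. recfn k (hf i) \<and>
      (\<forall>xs. length xs = k \<longrightarrow> hf i xs = Some (L xs ! i))"
    by metis
  define hs where "hs = map hf [0..<m]"
  have "recfn k (rcomp g hs)"
    using g hf unfolding hs_def by (intro recfn.rcomp) auto
  moreover have "rcomp g hs xs = Some (G (L xs))" if "length xs = k" for xs
  proof -
    have "map (\<lambda>h. the (h xs)) hs = map (\<lambda>i. L xs ! i) [0..<m]"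
      using hf that unfolding hs_def by auto
    also have "\<dots> = L xs"
      using L that unfolding rec_total_list_def by (metis map_nth)
    finally show ?thesis
      using hf g L that unfolding rcomp_def rec_total_list_def hs_def by auto
  qed
  ultimately show ?thesis unfolding rec_total_def by blast
qed

lemma rec_total_list_Nil: "rec_total_list k 0 (\<lambda>_. [])"
  unfolding rec_total_list_def by auto

lemma rec_total_list_Cons:
  "rec_total k A \<Longrightarrow> rec_total_list k m L \<Longrightarrow> rec_total_list k (Suc m) (\<lambda>xs. A xs # L xs)"
  unfolding rec_total_list_def by (auto simp: less_Suc_eq_0_disj)

lemma rec_total_list_drop: "j + m = k \<Longrightarrow> rec_total_list k m (\<lambda>xs. drop j xs)"
  unfolding rec_total_list_def by (auto intro: rec_total_cong[OF rec_total_proj[of "j + _"]])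

lemma rec_total_list_map:
  "(\<And>i. i < m \<Longrightarrow> rec_total k (F i)) \<Longrightarrow> rec_total_list k m (\<lambda>xs. map (\<lambda>i. F i xs) [0..<m])"
  unfolding rec_total_list_def by auto

lemma rec_total_comp1:
  assumes "rec_total 1 (\<lambda>xs. f (xs ! 0))" "rec_total k A"
  shows "rec_total k (\<lambda>xs. f (A xs))"
  using rec_total_comp_list[OF assms(1)[simplified]
      rec_total_list_Cons[OF assms(2) rec_total_list_Nil]]
  by simp

lemma rec_total_comp2:
  assumes "rec_total 2 (\<lambda>xs. f (xs ! 0) (xs ! 1))" "rec_total k A" "rec_total k B"
  shows "rec_total k (\<lambda>xs. f (A xs) (B xs))"
  using rec_total_comp_list[OF assms(1)[unfolded numeral_2_eq_2]
      rec_total_list_Cons[OF assms(2) rec_total_list_Cons[OF assms(3) rec_total_list_Nil]]]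
  by simp

lemma rec_total_comp3:
  assumes "rec_total 3 (\<lambda>xs. f (xs ! 0) (xs ! 1) (xs ! 2))"
    and "rec_total k A" "rec_total k B" "rec_total k C"
  shows "rec_total k (\<lambda>xs. f (A xs) (B xs) (C xs))"
  using rec_total_comp_list[OF assms(1)[unfolded numeral_3_eq_3]
      rec_total_list_Cons[OF assms(2) rec_total_list_Cons[OF assms(3)
        rec_total_list_Cons[OF assms(4) rec_total_list_Nil]]]]
  by (simp add: numeral_2_eq_2)

text \<open>The argument layout follows \<^const>\<open>rprec\<close>: recursion variable first, previous value
  second.\<close>

fun prim_rec :: "(nat list \<Rightarrow> nat) \<Rightarrow> (nat list \<Rightarrow> nat) \<Rightarrow> nat \<Rightarrow> nat list \<Rightarrow> nat" where
  "prim_rec G H 0 xs = G xs"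
| "prim_rec G H (Suc y) xs = H (y # prim_rec G H y xs # xs)"

lemma rec_total_prim_rec:
  assumes G: "rec_total k G" and H: "rec_total (Suc (Suc k)) H"
  shows "rec_total (Suc k) (\<lambda>xs. prim_rec G H (hd xs) (tl xs))"
proof -
  obtain g where g: "recfn k g" "\<forall>xs. length xs = k \<longrightarrow> g xs = Some (G xs)"
    using G unfolding rec_total_def by auto
  obtain h where h: "recfn (Suc (Suc k)) h" "\<forall>xs. length xs = Suc (Suc k) \<longrightarrow> h xs = Some (H xs)"
    using H unfolding rec_total_def by auto
  have "rprec g h (y # xs) = Some (prim_rec G H y xs)" if "length xs = k" for y xs
    using that g h by (induction y) auto
  moreover have "recfn (Suc k) (rprec g h)"
    using g h by (intro recfn.rprec)
  ultimately show ?thesis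
    unfolding rec_total_def by (intro exI[of _ "rprec g h"]) (auto simp: length_Suc_conv)
qed

lemma rec_total_Suc:
  assumes "rec_total k A"
  shows "rec_total k (\<lambda>xs. Suc (A xs))"
proof -
  have "rec_total 1 (\<lambda>xs. Suc (xs ! 0))"
    unfolding rec_total_def using recfn.rsucc
    by (auto simp: length_Suc_conv intro!: exI[of _ "\<lambda>xs. Some (Suc (hd xs))"])
  then show ?thesis using assms by (rule rec_total_comp1)
qed

lemma rec_total_add:
  assumes "rec_total k A" "rec_total k B"
  shows "rec_total k (\<lambda>xs. A xs + B xs)"
proof -
  have t: "rec_total (Suc (Suc 0))
      (\<lambda>xs. prim_rec (\<lambda>ys. ys ! 0) (\<lambda>ys. Suc (ys ! 1)) (hd xs) (tl xs))"
    by (intro rec_total_prim_rec rec_total_proj rec_total_Suc) auto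
  have e: "prim_rec (\<lambda>ys. ys ! 0) (\<lambda>ys. Suc (ys ! 1)) y [x] = y + x" for y x
    by (induction y) auto
  have "rec_total 2 (\<lambda>xs. xs ! 0 + xs ! 1)"
    unfolding numeral_2_eq_2 by (rule rec_total_cong[OF t]) (use e in \<open>auto simp: length_Suc_conv\<close>)
  then show ?thesis using assms by (rule rec_total_comp2)
qed

lemma rec_total_pred:
  assumes "rec_total k A"
  shows "rec_total k (\<lambda>xs. A xs - 1)"
proof -
  have t: "rec_total (Suc 0) (\<lambda>xs. prim_rec (\<lambda>_. 0) (\<lambda>ys. ys ! 0) (hd xs) (tl xs))"
    by (intro rec_total_prim_rec rec_total_proj rec_total_const) auto
  have e: "prim_rec (\<lambda>_. 0) (\<lambda>ys. ys ! 0) y [] = y - 1" for y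
    by (cases y) auto
  have "rec_total 1 (\<lambda>xs. xs ! 0 - 1)"
    unfolding One_nat_def by (rule rec_total_cong[OF t]) (use e in \<open>auto simp: length_Suc_conv\<close>)
  then show ?thesis using assms by (rule rec_total_comp1)
qed

lemma rec_total_diff:
  assumes "rec_total k A" "rec_total k B"
  shows "rec_total k (\<lambda>xs. A xs - B xs)"
proof -
  have t: "rec_total (Suc (Suc 0))
      (\<lambda>xs. prim_rec (\<lambda>ys. ys ! 0) (\<lambda>ys. ys ! 1 - 1) (hd xs) (tl xs))"
    by (intro rec_total_prim_rec rec_total_proj rec_total_pred) auto
  have e: "prim_rec (\<lambda>ys. ys ! 0) (\<lambda>ys. ys ! 1 - 1) y [x] = x - y" for y x
    by (induction y) auto
  have "rec_total 2 (\<lambda>xs. xs ! 1 - xs ! 0)"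
    unfolding numeral_2_eq_2 by (rule rec_total_cong[OF t]) (use e in \<open>auto simp: length_Suc_conv\<close>)
  then have "rec_total 2 (\<lambda>xs. xs ! 0 - xs ! 1)"
    by (rule rec_total_comp2[where f = "\<lambda>a b. b - a"]) (auto intro: rec_total_proj)
  then show ?thesis using assms by (rule rec_total_comp2)
qed

lemma rec_total_mult:
  assumes "rec_total k A" "rec_total k B"
  shows "rec_total k (\<lambda>xs. A xs * B xs)"
proof -
  have t: "rec_total (Suc (Suc 0))
      (\<lambda>xs. prim_rec (\<lambda>_. 0) (\<lambda>ys. ys ! 1 + ys ! 2) (hd xs) (tl xs))"
    by (intro rec_total_prim_rec rec_total_proj rec_total_add rec_total_const) auto
  have e: "prim_rec (\<lambda>_. 0) (\<lambda>ys. ys ! 1 + ys ! 2) y [x] = y * x" for y x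
    by (induction y) auto
  have "rec_total 2 (\<lambda>xs. xs ! 0 * xs ! 1)"
    unfolding numeral_2_eq_2 by (rule rec_total_cong[OF t]) (use e in \<open>auto simp: length_Suc_conv\<close>)
  then show ?thesis using assms by (rule rec_total_comp2)
qed

lemma rec_total_if_zero:
  assumes "rec_total k C" "rec_total k A" "rec_total k B"
  shows "rec_total k (\<lambda>xs. if C xs = 0 then A xs else B xs)"
proof -
  have t: "rec_total (Suc (Suc (Suc 0)))
      (\<lambda>xs. prim_rec (\<lambda>ys. ys ! 0) (\<lambda>ys. ys ! 3) (hd xs) (tl xs))"
    by (intro rec_total_prim_rec rec_total_proj) auto
  have e: "prim_rec (\<lambda>ys. ys ! 0) (\<lambda>ys. ys ! 3) y [a, b] = (if y = 0 then a else b)"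
    for y a b
    by (cases y) auto
  have "rec_total 3 (\<lambda>xs. if xs ! 0 = 0 then xs ! 1 else xs ! 2)"
    unfolding numeral_3_eq_3 by (rule rec_total_cong[OF t]) (use e in \<open>auto simp: length_Suc_conv\<close>)
  then show ?thesis using assms by (rule rec_total_comp3)
qed

lemma rec_total_if:
  "rec_decidable k P \<Longrightarrow> rec_total k A \<Longrightarrow> rec_total k B
    \<Longrightarrow> rec_total k (\<lambda>xs. if P xs then A xs else B xs)"
  unfolding rec_decidable_def by (drule rec_total_if_zero[of _ _ B A]) (auto elim: rec_total_cong)

lemma rec_decidable_eq:
  "rec_total k A \<Longrightarrow> rec_total k B \<Longrightarrow> rec_decidable k (\<lambda>xs. A xs = B xs)"
  unfolding rec_decidable_def
  by (rule rec_total_cong,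
      rule rec_total_if_zero[of _ "\<lambda>xs. (A xs - B xs) + (B xs - A xs)" "\<lambda>_. 1" "\<lambda>_. 0"])
    (auto intro: rec_total_add rec_total_diff rec_total_const)

lemma rec_decidable_less:
  "rec_total k A \<Longrightarrow> rec_total k B \<Longrightarrow> rec_decidable k (\<lambda>xs. A xs < B xs)"
  unfolding rec_decidable_def
  by (rule rec_total_cong, rule rec_total_if_zero[of _ "\<lambda>xs. B xs - A xs" "\<lambda>_. 0" "\<lambda>_. 1"])
    (auto intro: rec_total_diff rec_total_const)

lemma rec_decidable_not: "rec_decidable k P \<Longrightarrow> rec_decidable k (\<lambda>xs. \<not> P xs)"
  unfolding rec_decidable_def by (rule rec_total_cong, rule rec_total_diff[OF rec_total_const]) auto

lemma rec_decidable_conj: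
  "rec_decidable k P \<Longrightarrow> rec_decidable k Q \<Longrightarrow> rec_decidable k (\<lambda>xs. P xs \<and> Q xs)"
  unfolding rec_decidable_def by (rule rec_total_cong, rule rec_total_mult) (assumption+, auto)

lemma rec_decidable_disj:
  "rec_decidable k P \<Longrightarrow> rec_decidable k Q \<Longrightarrow> rec_decidable k (\<lambda>xs. P xs \<or> Q xs)"
  using rec_decidable_not[OF rec_decidable_conj[OF rec_decidable_not rec_decidable_not]] by simp

lemma rec_decidable_imp:
  "rec_decidable k P \<Longrightarrow> rec_decidable k Q \<Longrightarrow> rec_decidable k (\<lambda>xs. P xs \<longrightarrow> Q xs)"
  using rec_decidable_disj[OF rec_decidable_not] by simp

lemma rec_decidable_comp_list:
  "rec_decidable m P \<Longrightarrow> rec_total_list k m L \<Longrightarrow> rec_decidable k (\<lambda>xs. P (L xs))"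
  unfolding rec_decidable_def by (drule rec_total_comp_list) auto

lemma rec_decidable_all_less:
  "(\<And>i. i < (m::nat) \<Longrightarrow> rec_total k (F i)) \<Longrightarrow> rec_decidable k (\<lambda>xs. \<forall>i<m. F i xs \<noteq> 0)"
proof (induction m)
  case 0
  have "rec_decidable k (\<lambda>xs. (0::nat) = 0)"
    by (intro rec_decidable_eq rec_total_const)
  then show ?case by (rule rec_decidable_cong) auto
next
  case (Suc m)
  have "rec_decidable k (\<lambda>xs. (\<forall>i<m. F i xs \<noteq> 0) \<and> \<not> F m xs = 0)"
    using Suc by (intro rec_decidable_conj rec_decidable_not rec_decidable_eq rec_total_const) auto
  then show ?case by (rule rec_decidable_cong) (auto simp: less_Suc_eq)
qed

text \<open>Bounded search returns the least witness below the bound, shifted by one so that 0 can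
  signal failure.\<close>

lemma rec_total_bounded_search:
  assumes P: "rec_decidable (Suc k) P" and B: "rec_total k B"
  shows "rec_total k (\<lambda>xs. if \<exists>y<B xs. P (y # xs) then Suc (LEAST y. P (y # xs)) else 0)"
proof -
  define H where "H ys = (if ys ! 1 = 0 then (if P (ys ! 0 # drop 2 ys) then Suc (ys ! 0) else 0)
    else ys ! 1)" for ys
  have "rec_total_list (Suc (Suc k)) (Suc k) (\<lambda>ys. ys ! 0 # drop 2 ys)"
    by (intro rec_total_list_Cons rec_total_list_drop rec_total_proj) auto
  then have "rec_total (Suc (Suc k)) H"
    unfolding H_def by (intro rec_total_if_zero rec_total_if rec_total_proj rec_total_Suc
        rec_total_const rec_decidable_comp_list[OF P]) auto
  then have search: "rec_total (Suc k) (\<lambda>xs. prim_rec (\<lambda>_. 0) H (hd xs) (tl xs))"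
    by (rule rec_total_prim_rec[OF rec_total_const])
  have "prim_rec (\<lambda>_. 0) H b ys = (if \<exists>y<b. P (y # ys) then Suc (LEAST y. P (y # ys)) else 0)"
    for b ys
  proof (induction b)
    case (Suc b)
    have "P (b # ys) \<Longrightarrow> \<not> (\<exists>y<b. P (y # ys)) \<Longrightarrow> (LEAST y. P (y # ys)) = b"
      by (intro Least_equality) (auto simp: not_less[symmetric])
    then show ?case using Suc by (auto simp: H_def less_Suc_eq)
  qed simp
  then have "rec_total (Suc k)
      (\<lambda>xs. if \<exists>y<hd xs. P (y # tl xs) then Suc (LEAST y. P (y # tl xs)) else 0)"
    by (intro rec_total_cong[OF search]) simp
  moreover have "rec_total_list k (Suc k) (\<lambda>xs. B xs # drop 0 xs)"
    by (intro rec_total_list_Cons B rec_total_list_drop) auto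
  ultimately show ?thesis
    by (rule rec_total_cong[OF rec_total_comp_list]) simp
qed

lemma rec_decidable_bounded_ex:
  assumes "rec_decidable (Suc k) P" and "rec_total k B"
  shows "rec_decidable k (\<lambda>xs. \<exists>y<B xs. P (y # xs))"
proof -
  have "rec_decidable k
      (\<lambda>xs. 0 < (if \<exists>y<B xs. P (y # xs) then Suc (LEAST y. P (y # xs)) else 0))"
    by (intro rec_decidable_less rec_total_const rec_total_bounded_search assms)
  then show ?thesis by (rule rec_decidable_cong) auto
qed

lemma rec_decidable_bounded_all:
  assumes "rec_decidable (Suc k) P" and "rec_total k B"
  shows "rec_decidable k (\<lambda>xs. \<forall>y<B xs. P (y # xs))"
proof -
  have "rec_decidable k (\<lambda>xs. \<not> (\<exists>y<B xs. \<not> P (y # xs)))"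
    by (intro rec_decidable_not rec_decidable_bounded_ex assms)
  then show ?thesis by (rule rec_decidable_cong) auto
qed

lemma rec_total_bounded_least:
  assumes "rec_decidable (Suc k) P" and "rec_total k B"
    and "\<And>xs. length xs = k \<Longrightarrow> \<exists>y<B xs. P (y # xs)"
  shows "rec_total k (\<lambda>xs. LEAST y. P (y # xs))"
  by (rule rec_total_cong[OF rec_total_pred[OF rec_total_bounded_search[OF assms(1,2)]]])
    (simp add: assms(3))

lemma rec_total_computable1:
  assumes "computable1 t" "rec_total k A"
  shows "rec_total k (\<lambda>xs. t (A xs))"
proof (rule rec_total_comp1[OF _ assms(2)])
  obtain g where g: "recfn 1 g" "\<And>x. g [x] = Some (t x)"
    using assms(1) unfolding computable1_def by blast
  have "g xs = Some (t (xs ! 0))" if "length xs = 1" for xs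
    using that g(2) by (auto simp: length_Suc_conv)
  then show "rec_total 1 (\<lambda>xs. t (xs ! 0))"
    unfolding rec_total_def using g(1) by blast
qed

lemma rec_total_computable2:
  assumes "computable2 p" "rec_total k A" "rec_total k B"
  shows "rec_total k (\<lambda>xs. p (A xs) (B xs))"
proof (rule rec_total_comp2[OF _ assms(2,3)])
  obtain g where g: "recfn 2 g" "\<And>x y. g [x, y] = Some (p x y)"
    using assms(1) unfolding computable2_def by blast
  have "g xs = Some (p (xs ! 0) (xs ! 1))" if "length xs = 2" for xs
    using that g(2) by (auto simp: numeral_2_eq_2 length_Suc_conv)
  then show "rec_total 2 (\<lambda>xs. p (xs ! 0) (xs ! 1))"
    unfolding rec_total_def using g(1) by blast
qed

lemma rec_decidable_decidable3:
  assumes "decidable3 R" "rec_total k A" "rec_total k B" "rec_total k C"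
  shows "rec_decidable k (\<lambda>xs. R (A xs) (B xs) (C xs))"
  unfolding rec_decidable_def
proof (rule rec_total_comp3[where f = "\<lambda>x y z. if R x y z then 1 else 0", OF _ assms(2-4)])
  obtain g where g: "recfn 3 g" "\<And>x y z. g [x, y, z] = Some (if R x y z then 1 else 0)"
    using assms(1) unfolding decidable3_def by blast
  have "g xs = Some (if R (xs ! 0) (xs ! 1) (xs ! 2) then 1 else 0)" if "length xs = 3" for xs
    using that g(2) by (auto simp: numeral_3_eq_3 length_Suc_conv)
  then show "rec_total 3 (\<lambda>xs. if R (xs ! 0) (xs ! 1) (xs ! 2) then 1 else 0)"
    unfolding rec_total_def using g(1) by blast
qed

lemma decidable3_rec_decidable:
  assumes "rec_decidable 3 P"
  shows "decidable3 (\<lambda>x y z. P [x, y, z])"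
proof -
  obtain g where "recfn 3 g" "\<And>xs. length xs = 3 \<Longrightarrow> g xs = Some (if P xs then 1 else 0)"
    using assms unfolding rec_decidable_def rec_total_def by blast
  then show ?thesis
    unfolding decidable3_def by (intro exI[of _ g]) (simp add: numeral_3_eq_3)
qed

lemma ce_rel2_ex_rec_decidable:
  assumes "rec_decidable 3 P"
  shows "ce_rel2 (\<lambda>x y. \<exists>w. P [w, x, y])"
proof -
  obtain g where g: "recfn (Suc 2) g"
    and g_val: "\<And>xs. length xs = Suc 2 \<Longrightarrow> g xs = Some (if \<not> P xs then 1 else 0)"
    using rec_decidable_not[OF assms] unfolding rec_decidable_def rec_total_def by auto
  have "(\<exists>w. P [w, x, y]) \<longleftrightarrow> rmu g [x, y] \<noteq> None" for x y
  proof -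
    have "g [w, x, y] = Some (if \<not> P [w, x, y] then 1 else 0)" for w
      using g_val by simp
    then show ?thesis
      unfolding rmu_def by auto
  qed
  then show ?thesis
    unfolding ce_rel2_def using recfn.rmu[OF g] by blast
qed

lemma Pi02_intro:
  assumes "rec_decidable 3 P" and "\<And>n. n \<in> A \<longleftrightarrow> (\<forall>u. \<exists>w. P [n, u, w])"
  shows "Pi02 A"
  unfolding Pi02_def using decidable3_rec_decidable[OF assms(1)] assms(2) by blast

subsection \<open>Stage approximations of partial recursive functions\<close>

text \<open>\<open>E s xs = Suc v\<close> records that the computation of \<open>f xs\<close> has halted with value \<open>v\<close> by
  stage \<open>s\<close>, and \<open>E s xs = 0\<close> that it has not halted yet.\<close>

definition stage_approx :: "nat \<Rightarrow> (nat list \<Rightarrow> nat option) \<Rightarrow> (nat \<Rightarrow> nat list \<Rightarrow> nat) \<Rightarrow> bool" where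
  "stage_approx k f E \<longleftrightarrow> rec_total (Suc k) (\<lambda>ys. E (hd ys) (tl ys)) \<and>
     (\<forall>xs. length xs = k \<longrightarrow>
       (\<forall>s v. E s xs = Suc v \<longrightarrow> f xs = Some v) \<and>
       (\<forall>v. f xs = Some v \<longrightarrow> (\<exists>s. E s xs \<noteq> 0)) \<and>
       (\<forall>s s'. E s xs \<noteq> 0 \<longrightarrow> s \<le> s' \<longrightarrow> E s' xs \<noteq> 0))"

lemma stage_approxI:
  assumes "rec_total (Suc k) (\<lambda>ys. E (hd ys) (tl ys))"
    and "\<And>xs s v. length xs = k \<Longrightarrow> E s xs = Suc v \<Longrightarrow> f xs = Some v"
    and "\<And>xs v. length xs = k \<Longrightarrow> f xs = Some v \<Longrightarrow> \<exists>s. E s xs \<noteq> 0"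
    and "\<And>xs s s'. length xs = k \<Longrightarrow> E s xs \<noteq> 0 \<Longrightarrow> s \<le> s' \<Longrightarrow> E s' xs \<noteq> 0"
  shows "stage_approx k f E"
  using assms unfolding stage_approx_def by blast

context
  fixes k f E
  assumes E: "stage_approx k f E"
begin

lemma stage_approx_rec_total: "rec_total (Suc k) (\<lambda>ys. E (hd ys) (tl ys))"
  using E unfolding stage_approx_def by blast

lemma stage_approx_sound: "length xs = k \<Longrightarrow> E s xs = Suc v \<Longrightarrow> f xs = Some v"
  using E unfolding stage_approx_def by blast

lemma stage_approx_halts: "length xs = k \<Longrightarrow> f xs = Some v \<Longrightarrow> \<exists>s. E s xs \<noteq> 0"
  using E unfolding stage_approx_def by blast

lemma stage_approx_mono: "length xs = k \<Longrightarrow> E s xs \<noteq> 0 \<Longrightarrow> s \<le> s' \<Longrightarrow> E s' xs \<noteq> 0"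
  using E unfolding stage_approx_def by blast

lemma stage_approx_value: "length xs = k \<Longrightarrow> E s xs \<noteq> 0 \<Longrightarrow> f xs = Some (E s xs - 1)"
  using stage_approx_sound[of xs s "E s xs - 1"] by simp

lemma stage_approx_stable: "length xs = k \<Longrightarrow> E s xs \<noteq> 0 \<Longrightarrow> s \<le> s' \<Longrightarrow> E s' xs = E s xs"
  using stage_approx_value[of xs s] stage_approx_value[of xs s'] stage_approx_mono[of xs s s']
  by simp

lemma stage_approx_eventually:
  assumes "length xs = k" "f xs = Some v"
  shows "eventually (\<lambda>s. E s xs = Suc v) sequentially"
proof -
  obtain s0 where s0: "E s0 xs \<noteq> 0"
    using stage_approx_halts assms by blast
  then have "E s0 xs = Suc v"
    using stage_approx_value assms by fastforce
  then show ?thesis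
    unfolding eventually_sequentially using stage_approx_stable[OF assms(1) s0] s0 by metis
qed

end

lemma rec_total_stage_comp:
  assumes "stage_approx k f E" "rec_total j S" "rec_total_list j k L"
  shows "rec_total j (\<lambda>ys. E (S ys) (L ys))"
  using rec_total_comp_list[OF stage_approx_rec_total[OF assms(1)]
      rec_total_list_Cons[OF assms(2,3)]]
  by simp

lemma stage_approx_zero: "stage_approx 0 (\<lambda>_. Some 0) (\<lambda>_ _. 1)"
  by (rule stage_approxI) (auto intro: rec_total_const)

lemma stage_approx_succ: "stage_approx 1 (\<lambda>xs. Some (Suc (hd xs))) (\<lambda>_ xs. Suc (Suc (hd xs)))"
proof (rule stage_approxI)
  show "rec_total (Suc 1) (\<lambda>ys. Suc (Suc (hd (tl ys))))"
    by (rule rec_total_cong[OF rec_total_Suc[OF rec_total_Suc[OF rec_total_proj[of 1]]]])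
      (auto simp: length_Suc_conv)
qed auto

lemma stage_approx_proj: "i < n \<Longrightarrow> stage_approx n (\<lambda>xs. Some (xs ! i)) (\<lambda>_ xs. Suc (xs ! i))"
proof (rule stage_approxI)
  show "i < n \<Longrightarrow> rec_total (Suc n) (\<lambda>ys. Suc (tl ys ! i))"
    by (rule rec_total_cong[OF rec_total_Suc[OF rec_total_proj[of "Suc i"]]])
      (auto simp: length_Suc_conv)
qed auto

definition comp_stages :: "(nat \<Rightarrow> nat list \<Rightarrow> nat) \<Rightarrow> (nat \<Rightarrow> nat \<Rightarrow> nat list \<Rightarrow> nat) \<Rightarrow> nat
    \<Rightarrow> nat \<Rightarrow> nat list \<Rightarrow> nat" where
  "comp_stages Eg Eh m s xs =
     (if \<forall>i<m. Eh i s xs \<noteq> 0 then Eg s (map (\<lambda>i. Eh i s xs - 1) [0..<m]) else 0)"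

context
  fixes g hs Eg Eh n
  assumes Eg: "stage_approx (length hs) g Eg"
    and Eh: "\<And>i. i < length hs \<Longrightarrow> stage_approx n (hs ! i) (Eh i)"
begin

lemma comp_stages_sound:
  assumes xs: "length xs = n" and E: "comp_stages Eg Eh (length hs) s xs = Suc v"
  shows "rcomp g hs xs = Some v"
proof -
  have nz: "Eh i s xs \<noteq> 0" if "i < length hs" for i
    using E that unfolding comp_stages_def by (auto split: if_splits)
  have hs_val: "(hs ! i) xs = Some (Eh i s xs - 1)" if "i < length hs" for i
    using stage_approx_value[OF Eh[OF that] xs nz[OF that]] .
  have args: "map (\<lambda>h. the (h xs)) hs = map (\<lambda>i. Eh i s xs - 1) [0..<length hs]"
    by (rule nth_equalityI) (simp_all add: hs_val)
  have "Eg s (map (\<lambda>i. Eh i s xs - 1) [0..<length hs]) = Suc v"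
    using E nz unfolding comp_stages_def by (simp split: if_splits)
  then have "g (map (\<lambda>h. the (h xs)) hs) = Some v"
    unfolding args by (intro stage_approx_sound[OF Eg]) simp_all
  moreover have "\<forall>h\<in>set hs. h xs \<noteq> None"
    using hs_val by (auto simp: in_set_conv_nth)
  ultimately show ?thesis
    unfolding rcomp_def by simp
qed

lemma comp_stages_halts:
  assumes xs: "length xs = n" and v: "rcomp g hs xs = Some v"
  shows "\<exists>s. comp_stages Eg Eh (length hs) s xs \<noteq> 0"
proof -
  define vs where "vs = map (\<lambda>h. the (h xs)) hs"
  have halts: "\<forall>h\<in>set hs. h xs \<noteq> None" and gv: "g vs = Some v"
    using v unfolding rcomp_def vs_def by (simp_all split: if_splits)
  have "eventually (\<lambda>s. Eh i s xs = Suc (vs ! i)) sequentially" if "i < length hs" for i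
  proof -
    have "(hs ! i) xs = Some (vs ! i)"
      using halts that unfolding vs_def by auto
    then show ?thesis
      using stage_approx_eventually[OF Eh[OF that] xs] by blast
  qed
  then have "eventually (\<lambda>s. \<forall>i\<in>{..<length hs}. Eh i s xs = Suc (vs ! i)) sequentially"
    by (intro eventually_ball_finite) auto
  moreover have "eventually (\<lambda>s. Eg s vs = Suc v) sequentially"
    using stage_approx_eventually[OF Eg _ gv] unfolding vs_def by simp
  ultimately have "eventually (\<lambda>s. comp_stages Eg Eh (length hs) s xs = Suc v) sequentially"
  proof eventually_elim
    case (elim s)
    then have "map (\<lambda>i. Eh i s xs - 1) [0..<length hs] = vs"
      unfolding vs_def by (intro nth_equalityI) auto
    then show ?case
      using elim unfolding comp_stages_def by auto
  qed
  then obtain s0 where "comp_stages Eg Eh (length hs) s0 xs = Suc v"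
    unfolding eventually_sequentially by blast
  then show ?thesis
    by (intro exI[of _ s0]) simp
qed

lemma comp_stages_mono:
  assumes xs: "length xs = n" and E: "comp_stages Eg Eh (length hs) s xs \<noteq> 0" and "s \<le> s'"
  shows "comp_stages Eg Eh (length hs) s' xs \<noteq> 0"
proof -
  have nz: "Eh i s xs \<noteq> 0" if "i < length hs" for i
    using E that unfolding comp_stages_def by (auto split: if_splits)
  have stable: "Eh i s' xs = Eh i s xs" if "i < length hs" for i
    using stage_approx_stable[OF Eh[OF that] xs nz[OF that] \<open>s \<le> s'\<close>] .
  have "Eg s (map (\<lambda>i. Eh i s xs - 1) [0..<length hs]) \<noteq> 0"
    using E nz unfolding comp_stages_def by (simp split: if_splits)
  then have "Eg s' (map (\<lambda>i. Eh i s xs - 1) [0..<length hs]) \<noteq> 0"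
    by (rule stage_approx_mono[OF Eg _ _ \<open>s \<le> s'\<close>, rotated]) simp
  moreover have "map (\<lambda>i. Eh i s' xs - 1) [0..<length hs] = map (\<lambda>i. Eh i s xs - 1) [0..<length hs]"
    using stable by simp
  ultimately show ?thesis
    using nz stable unfolding comp_stages_def by (simp del: map_eq_conv)
qed

lemma rec_total_comp_stages:
  "rec_total (Suc n) (\<lambda>ys. comp_stages Eg Eh (length hs) (hd ys) (tl ys))"
proof -
  have Eh_total: "rec_total (Suc n) (\<lambda>ys. Eh i (hd ys) (tl ys))" if "i < length hs" for i
    using stage_approx_rec_total[OF Eh[OF that]] .
  have "rec_total_list (Suc n) (Suc (length hs))
      (\<lambda>ys. hd ys # map (\<lambda>i. Eh i (hd ys) (tl ys) - 1) [0..<length hs])"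
    by (intro rec_total_list_Cons rec_total_list_map rec_total_pred Eh_total,
        rule rec_total_cong[OF rec_total_proj[of 0]]) (auto simp: length_Suc_conv)
  from rec_total_comp_list[OF stage_approx_rec_total[OF Eg] this]
  have "rec_total (Suc n) (\<lambda>ys. Eg (hd ys) (map (\<lambda>i. Eh i (hd ys) (tl ys) - 1) [0..<length hs]))"
    by simp
  then show ?thesis
    unfolding comp_stages_def by (intro rec_total_if rec_decidable_all_less Eh_total rec_total_const)
qed

lemma stage_approx_rcomp: "stage_approx n (rcomp g hs) (comp_stages Eg Eh (length hs))"
  by (rule stage_approxI[OF rec_total_comp_stages comp_stages_sound comp_stages_halts
        comp_stages_mono])

end

fun prec_stages :: "(nat \<Rightarrow> nat list \<Rightarrow> nat) \<Rightarrow> (nat \<Rightarrow> nat list \<Rightarrow> nat) \<Rightarrow> nat \<Rightarrow> nat \<Rightarrow> nat list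
    \<Rightarrow> nat" where
  "prec_stages Eg Eh s 0 xs = Eg s xs"
| "prec_stages Eg Eh s (Suc y) xs =
     (case prec_stages Eg Eh s y xs of 0 \<Rightarrow> 0 | Suc u \<Rightarrow> Eh s (y # u # xs))"

context
  fixes g h Eg Eh n
  assumes Eg: "stage_approx n g Eg" and Eh: "stage_approx (Suc (Suc n)) h Eh"
begin

lemma prec_stages_sound:
  "length xs = n \<Longrightarrow> prec_stages Eg Eh s y xs = Suc v \<Longrightarrow> rprec g h (y # xs) = Some v"
proof (induction y arbitrary: v)
  case 0
  then show ?case using stage_approx_sound[OF Eg] by simp
next
  case (Suc y)
  then obtain u where u: "prec_stages Eg Eh s y xs = Suc u"
    by (auto split: nat.splits)
  then have "h (y # u # xs) = Some v"
    using Suc.prems stage_approx_sound[OF Eh] by simp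
  then show ?case using Suc.IH[OF Suc.prems(1) u] by simp
qed

lemma prec_stages_mono:
  "length xs = n \<Longrightarrow> prec_stages Eg Eh s y xs \<noteq> 0 \<Longrightarrow> s \<le> s'
    \<Longrightarrow> prec_stages Eg Eh s' y xs \<noteq> 0"
proof (induction y)
  case 0
  then show ?case using stage_approx_mono[OF Eg] by simp
next
  case (Suc y)
  then obtain u where u: "prec_stages Eg Eh s y xs = Suc u" and hu: "Eh s (y # u # xs) \<noteq> 0"
    by (auto split: nat.splits)
  obtain u' where u': "prec_stages Eg Eh s' y xs = Suc u'"
    using Suc u by (metis not0_implies_Suc nat.distinct(1))
  have "u' = u"
    using prec_stages_sound[OF Suc.prems(1) u] prec_stages_sound[OF Suc.prems(1) u'] by simp
  then show ?case
    using u' stage_approx_mono[OF Eh _ hu Suc.prems(3)] Suc.prems(1) by simp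
qed

lemma prec_stages_eventually:
  "length xs = n \<Longrightarrow> rprec g h (y # xs) = Some v
    \<Longrightarrow> eventually (\<lambda>s. prec_stages Eg Eh s y xs = Suc v) sequentially"
proof (induction y arbitrary: v)
  case 0
  then show ?case using stage_approx_eventually[OF Eg] by simp
next
  case (Suc y)
  then obtain u where u: "rprec g h (y # xs) = Some u" and hv: "h (y # u # xs) = Some v"
    by (auto split: option.splits)
  have "eventually (\<lambda>s. Eh s (y # u # xs) = Suc v) sequentially"
    using stage_approx_eventually[OF Eh _ hv] Suc.prems(1) by simp
  with Suc.IH[OF Suc.prems(1) u] show ?case
    by eventually_elim simp
qed

lemma rec_total_prec_stages:
  "rec_total (Suc (Suc n)) (\<lambda>ys. prec_stages Eg Eh (hd ys) (hd (tl ys)) (tl (tl ys)))"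
proof -
  define H where
    "H zs = (if zs ! 1 = 0 then 0 else Eh (zs ! 2) (zs ! 0 # (zs ! 1 - 1) # drop 3 zs))" for zs
  have prim_rec_eq: "prec_stages Eg Eh s y xs = prim_rec (\<lambda>zs. Eg (hd zs) (tl zs)) H y (s # xs)"
    for s y xs
    by (induction y) (auto simp: H_def numeral_3_eq_3 split: nat.split)
  have "rec_total (Suc (Suc (Suc n))) H"
    unfolding H_def
    by (intro rec_total_if_zero rec_total_proj rec_total_const rec_total_stage_comp[OF Eh]
        rec_total_list_Cons rec_total_list_drop rec_total_pred) auto
  then have "rec_total (Suc (Suc n))
      (\<lambda>xs. prim_rec (\<lambda>zs. Eg (hd zs) (tl zs)) H (hd xs) (tl xs))"
    by (rule rec_total_prim_rec[OF stage_approx_rec_total[OF Eg]])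
  moreover have "rec_total_list (Suc (Suc n)) (Suc (Suc n)) (\<lambda>ys. ys ! 1 # ys ! 0 # drop 2 ys)"
    by (intro rec_total_list_Cons rec_total_list_drop rec_total_proj) auto
  ultimately have "rec_total (Suc (Suc n))
      (\<lambda>ys. prim_rec (\<lambda>zs. Eg (hd zs) (tl zs)) H (ys ! 1) (ys ! 0 # drop 2 ys))"
    by (rule rec_total_cong[OF rec_total_comp_list]) simp
  then show ?thesis
    by (rule rec_total_cong) (auto simp: prim_rec_eq length_Suc_conv)
qed

lemma stage_approx_rprec:
  "stage_approx (Suc n) (rprec g h) (\<lambda>s ys. prec_stages Eg Eh s (hd ys) (tl ys))"
proof (rule stage_approxI)
  show "rec_total (Suc (Suc n)) (\<lambda>ys. prec_stages Eg Eh (hd ys) (hd (tl ys)) (tl (tl ys)))"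
    by (rule rec_total_prec_stages)
next
  fix ys s v assume "length ys = Suc n" "prec_stages Eg Eh s (hd ys) (tl ys) = Suc v"
  then show "rprec g h ys = Some v"
    using prec_stages_sound[of "tl ys"] by (cases ys) auto
next
  fix ys v assume "length ys = Suc n" "rprec g h ys = Some v"
  then have "eventually (\<lambda>s. prec_stages Eg Eh s (hd ys) (tl ys) = Suc v) sequentially"
    using prec_stages_eventually[of "tl ys"] by (cases ys) auto
  then show "\<exists>s. prec_stages Eg Eh s (hd ys) (tl ys) \<noteq> 0"
    unfolding eventually_sequentially by (metis nat.distinct(1) order_refl)
next
  fix ys s s' assume "length ys = Suc n" "prec_stages Eg Eh s (hd ys) (tl ys) \<noteq> 0" "s \<le> s'"
  then show "prec_stages Eg Eh s' (hd ys) (tl ys) \<noteq> 0"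
    using prec_stages_mono[of "tl ys"] by simp
qed

end

text \<open>By stage \<open>s\<close>, \<open>f (y # xs)\<close> has halted with value 0 (encoded as 1) and \<open>f (z # xs)\<close> has
  halted for every \<open>z < y\<close>.\<close>

definition seen_zero :: "(nat \<Rightarrow> nat list \<Rightarrow> nat) \<Rightarrow> nat \<Rightarrow> nat list \<Rightarrow> nat \<Rightarrow> bool" where
  "seen_zero Ef s xs y \<longleftrightarrow> Ef s (y # xs) = 1 \<and> (\<forall>z<y. Ef s (z # xs) \<noteq> 0)"

definition mu_stages :: "(nat \<Rightarrow> nat list \<Rightarrow> nat) \<Rightarrow> nat \<Rightarrow> nat list \<Rightarrow> nat" where
  "mu_stages Ef s xs =
     (if \<exists>y<s. seen_zero Ef s xs y then Suc (LEAST y. seen_zero Ef s xs y) else 0)"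

context
  fixes f Ef n
  assumes Ef: "stage_approx (Suc n) f Ef"
begin

lemma mu_stages_sound:
  assumes xs: "length xs = n" and E: "mu_stages Ef s xs = Suc v"
  shows "rmu f xs = Some v"
proof -
  define cf where "cf y \<longleftrightarrow> f (y # xs) = Some 0 \<and> (\<forall>z<y. f (z # xs) \<noteq> None)" for y
  have val: "Ef s (y # xs) \<noteq> 0 \<Longrightarrow> f (y # xs) = Some (Ef s (y # xs) - 1)" for y
    using stage_approx_value[OF Ef] xs by simp
  have v: "v = (LEAST y. seen_zero Ef s xs y)" and "\<exists>y. seen_zero Ef s xs y"
    using E unfolding mu_stages_def by (auto split: if_splits)
  then have seen_v: "seen_zero Ef s xs v"
    by (metis LeastI)
  then have cf_v: "cf v"
    unfolding cf_def seen_zero_def using val by fastforce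
  have "(LEAST y. cf y) = v"
  proof (rule Least_equality[where P = cf, OF cf_v], rule ccontr)
    fix y assume "cf y" and "\<not> v \<le> y"
    then have "y < v" by simp
    then have nz: "Ef s (y # xs) \<noteq> 0"
      using seen_v unfolding seen_zero_def by blast
    then have "Ef s (y # xs) = 1"
      using val[OF nz] \<open>cf y\<close> unfolding cf_def by simp
    moreover have "\<forall>z<y. Ef s (z # xs) \<noteq> 0"
      using \<open>y < v\<close> seen_v unfolding seen_zero_def by auto
    ultimately have "seen_zero Ef s xs y"
      unfolding seen_zero_def by blast
    then have "v \<le> y"
      unfolding v by (rule Least_le)
    then show False using \<open>y < v\<close> by simp
  qed
  then show ?thesis
    using cf_v unfolding rmu_def cf_def by auto
qed

lemma mu_stages_halts:
  assumes xs: "length xs = n" and v: "rmu f xs = Some v"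
  shows "\<exists>s. mu_stages Ef s xs \<noteq> 0"
proof -
  have zero: "f (v # xs) = Some 0" and defined: "\<forall>z<v. f (z # xs) \<noteq> None"
    using v LeastI_ex[of "\<lambda>y. f (y # xs) = Some 0 \<and> (\<forall>z<y. f (z # xs) \<noteq> None)"]
    unfolding rmu_def by (auto split: if_splits)
  have "eventually (\<lambda>s. Ef s (z # xs) = Suc (the (f (z # xs)))) sequentially" if "z \<le> v" for z
  proof -
    have "f (z # xs) \<noteq> None"
      using zero defined that by (cases "z = v") auto
    then show ?thesis
      using stage_approx_eventually[OF Ef, of "z # xs"] xs by auto
  qed
  then have "eventually (\<lambda>s. \<forall>z\<in>{..v}. Ef s (z # xs) = Suc (the (f (z # xs)))) sequentially"
    by (intro eventually_ball_finite) auto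
  moreover have "eventually (\<lambda>s. v < s) sequentially"
    by (rule eventually_gt_at_top)
  ultimately have "eventually (\<lambda>s. mu_stages Ef s xs \<noteq> 0) sequentially"
  proof eventually_elim
    case (elim s)
    then have "seen_zero Ef s xs v"
      using zero unfolding seen_zero_def by auto
    then show ?case
      using elim unfolding mu_stages_def by auto
  qed
  then obtain s0 where "\<forall>s\<ge>s0. mu_stages Ef s xs \<noteq> 0"
    unfolding eventually_sequentially ..
  then show ?thesis by blast
qed

lemma mu_stages_mono:
  assumes xs: "length xs = n" and E: "mu_stages Ef s xs \<noteq> 0" and "s \<le> s'"
  shows "mu_stages Ef s' xs \<noteq> 0"
proof -
  obtain y where "y < s" and seen: "seen_zero Ef s xs y"
    using E unfolding mu_stages_def by (auto split: if_splits)
  have "Ef s (z # xs) \<noteq> 0" if "z \<le> y" for z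
    using seen that unfolding seen_zero_def by (cases "z = y") auto
  then have "Ef s' (z # xs) = Ef s (z # xs)" if "z \<le> y" for z
    using stage_approx_stable[OF Ef _ _ \<open>s \<le> s'\<close>] xs that by simp
  then have "seen_zero Ef s' xs y"
    using seen unfolding seen_zero_def by auto
  then have "\<exists>y<s'. seen_zero Ef s' xs y"
    using \<open>y < s\<close> \<open>s \<le> s'\<close> by (meson less_le_trans)
  then show ?thesis
    unfolding mu_stages_def by simp
qed

lemma rec_total_mu_stages: "rec_total (Suc n) (\<lambda>ys. mu_stages Ef (hd ys) (tl ys))"
proof -
  have "rec_decidable (Suc (Suc (Suc n))) (\<lambda>ws. Ef (ws ! 2) (ws ! 0 # drop 3 ws) \<noteq> 0)"
    by (intro rec_decidable_not rec_decidable_eq rec_total_const rec_total_stage_comp[OF Ef]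
        rec_total_list_Cons rec_total_list_drop rec_total_proj) auto
  from rec_decidable_bounded_all[OF this rec_total_proj[of 0]]
  have "rec_decidable (Suc (Suc n)) (\<lambda>zs. \<forall>z<zs ! 0. Ef (zs ! 1) (z # drop 2 zs) \<noteq> 0)"
    by (simp add: numeral_3_eq_3 numeral_2_eq_2)
  moreover have "rec_decidable (Suc (Suc n)) (\<lambda>zs. Ef (zs ! 1) (zs ! 0 # drop 2 zs) = 1)"
    by (intro rec_decidable_eq rec_total_const rec_total_stage_comp[OF Ef]
        rec_total_list_Cons rec_total_list_drop rec_total_proj) auto
  ultimately have "rec_decidable (Suc (Suc n)) (\<lambda>zs. seen_zero Ef (zs ! 1) (drop 2 zs) (zs ! 0))"
    unfolding seen_zero_def by (intro rec_decidable_conj)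
  from rec_total_bounded_search[OF this rec_total_proj[of 0]]
  show ?thesis
    by (rule rec_total_cong) (auto simp: mu_stages_def length_Suc_conv)
qed

lemma stage_approx_rmu: "stage_approx n (rmu f) (mu_stages Ef)"
  by (rule stage_approxI[OF rec_total_mu_stages mu_stages_sound mu_stages_halts mu_stages_mono])

end

theorem recfn_stage_approx: "recfn k f \<Longrightarrow> \<exists>E. stage_approx k f E"
proof (induction rule: recfn.induct)
  case rzero
  show ?case using stage_approx_zero by blast
next
  case rsucc
  show ?case using stage_approx_succ by blast
next
  case (rproj i n)
  then show ?case using stage_approx_proj by blast
next
  case (rcomp hs g n)
  then obtain Eg where "stage_approx (length hs) g Eg"
    by blast
  moreover from rcomp obtain Es where "\<forall>h\<in>set hs. stage_approx n h (Es h)"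
    by metis
  ultimately show ?case
    using stage_approx_rcomp[where Eh = "\<lambda>i. Es (hs ! i)"] by (metis nth_mem)
next
  case (rprec n g h)
  then show ?case using stage_approx_rprec by blast
next
  case (rmu n f)
  then show ?case using stage_approx_rmu by blast
qed

lemma ce_rel2_stages:
  assumes "ce_rel2 R"
  obtains H where "rec_decidable 3 H"
    and "\<And>x y. R x y \<longleftrightarrow> (\<exists>s. H [s, x, y])"
    and "\<And>s s' x y. H [s, x, y] \<Longrightarrow> s \<le> s' \<Longrightarrow> H [s', x, y]"
proof -
  obtain g where g: "recfn 2 g" and R: "\<And>x y. R x y \<longleftrightarrow> g [x, y] \<noteq> None"
    using assms unfolding ce_rel2_def by blast
  obtain E where E: "stage_approx 2 g E"
    using recfn_stage_approx[OF g] by blast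
  have "rec_decidable (Suc 2) (\<lambda>ys. E (hd ys) (tl ys) \<noteq> 0)"
    by (intro rec_decidable_not rec_decidable_eq rec_total_const stage_approx_rec_total[OF E])
  then have "rec_decidable 3 (\<lambda>ys. E (hd ys) (tl ys) \<noteq> 0)"
    by simp
  moreover have "R x y \<longleftrightarrow> (\<exists>s. E s [x, y] \<noteq> 0)" for x y
  proof
    assume "R x y"
    then obtain v where "g [x, y] = Some v"
      using R by blast
    then show "\<exists>s. E s [x, y] \<noteq> 0"
      using stage_approx_halts[OF E] by simp
  next
    assume "\<exists>s. E s [x, y] \<noteq> 0"
    then obtain s where "E s [x, y] \<noteq> 0" by blast
    then show "R x y"
      using R stage_approx_value[OF E, of "[x, y]"] by simp
  qed
  moreover have "E s' [x, y] \<noteq> 0" if "E s [x, y] \<noteq> 0" "s \<le> s'" for s s' x y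
    using stage_approx_mono[OF E _ that] by simp
  ultimately show ?thesis
    using that[of "\<lambda>ys. E (hd ys) (tl ys) \<noteq> 0"] by simp
qed

subsection \<open>Cantor pairing\<close>

lemma rec_total_prod_encode:
  assumes "rec_total k A" "rec_total k B"
  shows "rec_total k (\<lambda>xs. prod_encode (A xs, B xs))"
proof -
  have t: "rec_total (Suc 0)
      (\<lambda>xs. prim_rec (\<lambda>_. 0) (\<lambda>ys. ys ! 1 + Suc (ys ! 0)) (hd xs) (tl xs))"
    by (intro rec_total_prim_rec rec_total_add rec_total_Suc rec_total_proj rec_total_const) auto
  have e: "prim_rec (\<lambda>_. 0) (\<lambda>ys. ys ! 1 + Suc (ys ! 0)) y [] = triangle y" for y
    by (induction y) auto
  have "rec_total 1 (\<lambda>xs. triangle (xs ! 0))"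
    unfolding One_nat_def by (rule rec_total_cong[OF t]) (use e in \<open>auto simp: length_Suc_conv\<close>)
  from rec_total_comp1[OF this rec_total_add[OF assms]]
  have "rec_total k (\<lambda>xs. triangle (A xs + B xs) + A xs)"
    by (rule rec_total_add[OF _ assms(1)])
  then show ?thesis
    by (rule rec_total_cong) (simp add: prod_encode_def)
qed

lemma rec_total_of_decidable_graph:
  assumes graph: "rec_decidable 2 (\<lambda>xs. xs ! 0 = F (xs ! 1))" and bound: "\<And>w. F w \<le> w"
    and A: "rec_total k A"
  shows "rec_total k (\<lambda>xs. F (A xs))"
proof (rule rec_total_comp1[OF _ A])
  have "rec_total 1 (\<lambda>xs. LEAST y. (\<lambda>zs. zs ! 0 = F (zs ! 1)) (y # xs))"
  proof (rule rec_total_bounded_least)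
    show "rec_decidable (Suc 1) (\<lambda>zs. zs ! 0 = F (zs ! 1))"
      using graph by (simp add: numeral_2_eq_2)
    show "rec_total 1 (\<lambda>xs. Suc (xs ! 0))"
      by (intro rec_total_Suc rec_total_proj) simp
    show "\<exists>y<Suc (xs ! 0). (\<lambda>zs. zs ! 0 = F (zs ! 1)) (y # xs)" for xs :: "nat list"
      using bound[of "xs ! 0"] by (auto simp: less_Suc_eq_le)
  qed
  then show "rec_total 1 (\<lambda>xs. F (xs ! 0))"
    by (rule rec_total_cong) (rule Least_equality, simp_all)
qed

lemma eq_fst_prod_decode_iff: "a = fst (prod_decode w) \<longleftrightarrow> (\<exists>b<Suc w. prod_encode (a, b) = w)"
proof
  assume "a = fst (prod_decode w)"
  then have "prod_encode (a, snd (prod_decode w)) = w"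
    by simp
  then show "\<exists>b<Suc w. prod_encode (a, b) = w"
    using le_prod_encode_2 by (metis le_imp_less_Suc)
qed auto

lemma eq_snd_prod_decode_iff: "b = snd (prod_decode w) \<longleftrightarrow> (\<exists>a<Suc w. prod_encode (a, b) = w)"
proof
  assume "b = snd (prod_decode w)"
  then have "prod_encode (fst (prod_decode w), b) = w"
    by simp
  then show "\<exists>a<Suc w. prod_encode (a, b) = w"
    using le_prod_encode_1 by (metis le_imp_less_Suc)
qed auto

lemma rec_total_fst_prod_decode:
  assumes "rec_total k A"
  shows "rec_total k (\<lambda>xs. fst (prod_decode (A xs)))"
proof (rule rec_total_of_decidable_graph[OF _ _ assms])
  have "rec_decidable (Suc 2) (\<lambda>zs. prod_encode (zs ! 1, zs ! 0) = zs ! 2)"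
    by (intro rec_decidable_eq rec_total_prod_encode rec_total_proj) auto
  from rec_decidable_bounded_ex[OF this rec_total_Suc[OF rec_total_proj[of 1]]]
  show "rec_decidable 2 (\<lambda>xs. xs ! 0 = fst (prod_decode (xs ! 1)))"
    by (rule rec_decidable_cong) (auto simp: eq_fst_prod_decode_iff nth_Cons')
  show "fst (prod_decode w) \<le> w" for w
    using le_prod_encode_1[of "fst (prod_decode w)" "snd (prod_decode w)"] by simp
qed

lemma rec_total_snd_prod_decode:
  assumes "rec_total k A"
  shows "rec_total k (\<lambda>xs. snd (prod_decode (A xs)))"
proof (rule rec_total_of_decidable_graph[OF _ _ assms])
  have "rec_decidable (Suc 2) (\<lambda>zs. prod_encode (zs ! 0, zs ! 1) = zs ! 2)"
    by (intro rec_decidable_eq rec_total_prod_encode rec_total_proj) auto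
  from rec_decidable_bounded_ex[OF this rec_total_Suc[OF rec_total_proj[of 1]]]
  show "rec_decidable 2 (\<lambda>xs. xs ! 0 = snd (prod_decode (xs ! 1)))"
    by (rule rec_decidable_cong) (auto simp: eq_snd_prod_decode_iff nth_Cons')
  show "snd (prod_decode w) \<le> w" for w
    using le_prod_encode_2[of "snd (prod_decode w)" "fst (prod_decode w)"] by simp
qed

lemma ex_prod_decode_iff: "(\<exists>w. P (fst (prod_decode w)) (snd (prod_decode w))) \<longleftrightarrow> (\<exists>x y. P x y)"
proof
  assume "\<exists>x y. P x y"
  then obtain x y where "P x y" by blast
  then have "P (fst (prod_decode (prod_encode (x, y)))) (snd (prod_decode (prod_encode (x, y))))"
    by simp
  then show "\<exists>w. P (fst (prod_decode w)) (snd (prod_decode w))" ..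
qed blast

lemma all_ex_prod_decode_iff:
  fixes \<Phi> :: "nat \<Rightarrow> nat \<Rightarrow> nat \<Rightarrow> nat \<Rightarrow> nat \<Rightarrow> nat \<Rightarrow> nat \<Rightarrow> bool"
  defines "\<pi>\<^sub>1 \<equiv> \<lambda>u. fst (prod_decode u)" and "\<pi>\<^sub>2 \<equiv> \<lambda>u. snd (prod_decode u)"
  shows "(\<forall>y a b s. \<exists>x c s'. \<Phi> y a b s x c s') \<longleftrightarrow>
    (\<forall>u. \<exists>w. \<Phi> (\<pi>\<^sub>1 u) (\<pi>\<^sub>1 (\<pi>\<^sub>2 u)) (\<pi>\<^sub>1 (\<pi>\<^sub>2 (\<pi>\<^sub>2 u))) (\<pi>\<^sub>2 (\<pi>\<^sub>2 (\<pi>\<^sub>2 u)))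
      (\<pi>\<^sub>1 w) (\<pi>\<^sub>1 (\<pi>\<^sub>2 w)) (\<pi>\<^sub>2 (\<pi>\<^sub>2 w)))"
proof (intro iffI allI)
  fix u
  assume "\<forall>y a b s. \<exists>x c s'. \<Phi> y a b s x c s'"
  then obtain x c s' where "\<Phi> (\<pi>\<^sub>1 u) (\<pi>\<^sub>1 (\<pi>\<^sub>2 u)) (\<pi>\<^sub>1 (\<pi>\<^sub>2 (\<pi>\<^sub>2 u))) (\<pi>\<^sub>2 (\<pi>\<^sub>2 (\<pi>\<^sub>2 u))) x c s'"
    by blast
  then show "\<exists>w. \<Phi> (\<pi>\<^sub>1 u) (\<pi>\<^sub>1 (\<pi>\<^sub>2 u)) (\<pi>\<^sub>1 (\<pi>\<^sub>2 (\<pi>\<^sub>2 u))) (\<pi>\<^sub>2 (\<pi>\<^sub>2 (\<pi>\<^sub>2 u)))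
      (\<pi>\<^sub>1 w) (\<pi>\<^sub>1 (\<pi>\<^sub>2 w)) (\<pi>\<^sub>2 (\<pi>\<^sub>2 w))"
    by (intro exI[of _ "prod_encode (x, prod_encode (c, s'))"]) (simp add: \<pi>\<^sub>1_def \<pi>\<^sub>2_def)
next
  fix y a b s
  assume "\<forall>u. \<exists>w. \<Phi> (\<pi>\<^sub>1 u) (\<pi>\<^sub>1 (\<pi>\<^sub>2 u)) (\<pi>\<^sub>1 (\<pi>\<^sub>2 (\<pi>\<^sub>2 u))) (\<pi>\<^sub>2 (\<pi>\<^sub>2 (\<pi>\<^sub>2 u)))
      (\<pi>\<^sub>1 w) (\<pi>\<^sub>1 (\<pi>\<^sub>2 w)) (\<pi>\<^sub>2 (\<pi>\<^sub>2 w))"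
  then obtain w where "\<Phi> y a b s (\<pi>\<^sub>1 w) (\<pi>\<^sub>1 (\<pi>\<^sub>2 w)) (\<pi>\<^sub>2 (\<pi>\<^sub>2 w))"
    by (auto simp: \<pi>\<^sub>1_def \<pi>\<^sub>2_def dest: spec[of _ "prod_encode (y, prod_encode (a, prod_encode (b, s)))"])
  then show "\<exists>x c s'. \<Phi> y a b s x c s'"
    by blast
qed

subsection \<open>Interpolability\<close>

lemma interpolableI:
  assumes "\<And>y. \<exists>x. (x, y) \<in> R"
    and "\<And>y a b. (a, y) \<in> R \<Longrightarrow> (b, y) \<in> R \<Longrightarrow> \<exists>c. (c, y) \<in> R \<and> (a, c) \<in> R \<and> (b, c) \<in> R"
  shows "interpolable R"
  using assms unfolding interpolable_def by blast

lemma interpolableD: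
  assumes "interpolable R"
  shows interpolable_nonempty: "\<exists>x. (x, y) \<in> R"
    and interpolable_directed:
      "(a, y) \<in> R \<Longrightarrow> (b, y) \<in> R \<Longrightarrow> \<exists>c. (c, y) \<in> R \<and> (a, c) \<in> R \<and> (b, c) \<in> R"
  using assms unfolding interpolable_def by blast+

context
  fixes Rel :: "(nat \<times> nat) set" and H :: "nat \<Rightarrow> nat \<Rightarrow> nat \<Rightarrow> bool"
  assumes mem: "\<And>p q. (p, q) \<in> Rel \<longleftrightarrow> (\<exists>s. H s p q)"
    and mono: "\<And>s s' p q. H s p q \<Longrightarrow> s \<le> s' \<Longrightarrow> H s' p q"
begin

lemma eventually_stage:
  assumes "(p, q) \<in> Rel"
  shows "eventually (\<lambda>s. H s p q) sequentially"
proof -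
  from assms obtain s0 where "H s0 p q"
    unfolding mem ..
  then show ?thesis
    unfolding eventually_sequentially by (auto intro: mono[OF \<open>H s0 p q\<close>])
qed

lemma interpolable_imp_stages:
  assumes I: "interpolable Rel"
  shows "\<exists>x c s'. H s' x y \<and> (H s a y \<and> H s b y \<longrightarrow> H s' c y \<and> H s' a c \<and> H s' b c)"
proof -
  obtain x where x: "(x, y) \<in> Rel"
    using interpolable_nonempty[OF I] ..
  show ?thesis
  proof (cases "H s a y \<and> H s b y")
    case True
    then have "(a, y) \<in> Rel" "(b, y) \<in> Rel"
      unfolding mem by auto
    then obtain c where c: "(c, y) \<in> Rel" "(a, c) \<in> Rel" "(b, c) \<in> Rel"
      using interpolable_directed[OF I] by blast
    have "eventually (\<lambda>s'. H s' x y \<and> H s' c y \<and> H s' a c \<and> H s' b c) sequentially"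
      using eventually_stage[OF x] eventually_stage[OF c(1)] eventually_stage[OF c(2)]
        eventually_stage[OF c(3)]
      by (intro eventually_conj)
    then obtain N where "\<forall>s'\<ge>N. H s' x y \<and> H s' c y \<and> H s' a c \<and> H s' b c"
      unfolding eventually_sequentially ..
    then have "H N x y \<and> H N c y \<and> H N a c \<and> H N b c"
      by simp
    then show ?thesis by blast
  next
    case False
    from x obtain s' where "H s' x y"
      unfolding mem ..
    with False show ?thesis by blast
  qed
qed

lemma stages_imp_interpolable:
  assumes C: "\<And>y a b s. \<exists>x c s'. H s' x y \<and>
    (H s a y \<and> H s b y \<longrightarrow> H s' c y \<and> H s' a c \<and> H s' b c)"
  shows "interpolable Rel"
proof (rule interpolableI)
  fix y
  from C[where y = y] obtain x s' where "H s' x y"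
    by blast
  then show "\<exists>x. (x, y) \<in> Rel"
    unfolding mem by blast
next
  fix y a b
  assume "(a, y) \<in> Rel" "(b, y) \<in> Rel"
  then obtain sa sb where a: "H sa a y" and b: "H sb b y"
    unfolding mem by blast
  have "H (max sa sb) a y" "H (max sa sb) b y"
    by (rule mono[OF a], simp) (rule mono[OF b], simp)
  moreover obtain x c s' where "H s' x y \<and>
      (H (max sa sb) a y \<and> H (max sa sb) b y \<longrightarrow> H s' c y \<and> H s' a c \<and> H s' b c)"
    using C[where y = y and a = a and b = b and s = "max sa sb"] by blast
  ultimately have "H s' c y" "H s' a c" "H s' b c"
    by blast+
  then show "\<exists>c. (c, y) \<in> Rel \<and> (a, c) \<in> Rel \<and> (b, c) \<in> Rel"
    unfolding mem by blast
qed

lemma interpolable_iff_stages: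
  "interpolable Rel \<longleftrightarrow> (\<forall>y a b s. \<exists>x c s'. H s' x y \<and>
     (H s a y \<and> H s b y \<longrightarrow> H s' c y \<and> H s' a c \<and> H s' b c))"
proof
  assume "interpolable Rel"
  then show "\<forall>y a b s. \<exists>x c s'. H s' x y \<and> (H s a y \<and> H s b y \<longrightarrow> H s' c y \<and> H s' a c \<and> H s' b c)"
    by (intro allI interpolable_imp_stages)
qed (rule stages_imp_interpolable, blast)

end

lemma interpolable_if_unique_predecessor:
  assumes "\<And>y. \<exists>c. (c, y) \<in> R \<and> (c, c) \<in> R \<and> (\<forall>x. (x, y) \<in> R \<longrightarrow> x = c)"
  shows "interpolable R"
proof (rule interpolableI)
  fix y
  obtain c where c: "(c, y) \<in> R" "(c, c) \<in> R" "\<And>x. (x, y) \<in> R \<Longrightarrow> x = c"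
    using assms by blast
  then show "\<exists>x. (x, y) \<in> R" by blast
  fix a b assume a: "(a, y) \<in> R" and b: "(b, y) \<in> R"
  show "\<exists>c. (c, y) \<in> R \<and> (a, c) \<in> R \<and> (b, c) \<in> R"
    using c(1,2) c(3)[OF a] c(3)[OF b] by blast
qed

definition odd_loop_rel :: "(nat \<Rightarrow> bool) \<Rightarrow> (nat \<times> nat) set" where
  "odd_loop_rel P = {(2 * x + 1, 2 * x + 1) | x. True} \<union> {(2 * x + 1, 2 * x) | x. P x}"

lemma trans_odd_loop_rel: "trans (odd_loop_rel P)"
  unfolding trans_def odd_loop_rel_def by (auto simp: double_not_eq_Suc_double)

lemma interpolable_odd_loop_rel_iff: "interpolable (odd_loop_rel P) \<longleftrightarrow> (\<forall>x. P x)"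
proof
  assume I: "interpolable (odd_loop_rel P)"
  show "\<forall>x. P x"
  proof
    fix x
    obtain i where "(i, 2 * x) \<in> odd_loop_rel P"
      using interpolable_nonempty[OF I] ..
    then show "P x"
      unfolding odd_loop_rel_def by (auto simp: double_not_eq_Suc_double)
  qed
next
  assume P: "\<forall>x. P x"
  show "interpolable (odd_loop_rel P)"
  proof (rule interpolable_if_unique_predecessor)
    fix y :: nat
    obtain x where y: "y = 2 * x \<or> y = 2 * x + 1"
      by (metis evenE oddE)
    then have "(2 * x + 1, y) \<in> odd_loop_rel P"
      using P unfolding odd_loop_rel_def by auto
    moreover have "(2 * x + 1, 2 * x + 1) \<in> odd_loop_rel P"
      unfolding odd_loop_rel_def by auto
    moreover have "z = 2 * x + 1" if "(z, y) \<in> odd_loop_rel P" for z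
      using that y unfolding odd_loop_rel_def
      by (auto simp: Suc_double_not_eq_double double_not_eq_Suc_double)
    ultimately show "\<exists>c. (c, y) \<in> odd_loop_rel P \<and> (c, c) \<in> odd_loop_rel P \<and>
        (\<forall>z. (z, y) \<in> odd_loop_rel P \<longrightarrow> z = c)"
      by blast
  qed
qed

subsection \<open>\<open>\<Pi>\<^sup>0\<^sub>2\<close>-completeness\<close>

lemma image_pair_odd_loop_rel_iff:
  "z \<in> case_prod pair ` odd_loop_rel P \<longleftrightarrow>
    (\<exists>x. z = pair (2 * x + 1) (2 * x + 1) \<or> (z = pair (2 * x + 1) (2 * x) \<and> P x))"
  unfolding odd_loop_rel_def by auto

lemma computable_numbering_odd_loop_rel:
  assumes R: "decidable3 R" and pair: "computable2 pair"
  shows "computable_numbering (\<lambda>n. case_prod pair ` odd_loop_rel (\<lambda>x. \<exists>y. R n x y))"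
proof -
  define C where "C x y n z \<longleftrightarrow>
    z = pair (2 * x + 1) (2 * x + 1) \<or> (z = pair (2 * x + 1) (2 * x) \<and> R n x y)" for x y n z
  have "rec_decidable 3 (\<lambda>zs. C (fst (prod_decode (zs ! 0))) (snd (prod_decode (zs ! 0))) (zs ! 1) (zs ! 2))"
    unfolding C_def
    by (intro rec_decidable_disj rec_decidable_conj rec_decidable_eq rec_decidable_decidable3[OF R]
        rec_total_computable2[OF pair] rec_total_add rec_total_mult rec_total_fst_prod_decode
        rec_total_snd_prod_decode rec_total_proj rec_total_const) auto
  from ce_rel2_ex_rec_decidable[OF this]
  have "ce_rel2 (\<lambda>n z. \<exists>w. C (fst (prod_decode w)) (snd (prod_decode w)) n z)"
    by (simp add: nth_Cons')
  moreover have "(\<lambda>n z. \<exists>w. C (fst (prod_decode w)) (snd (prod_decode w)) n z) = (\<lambda>n z. \<exists>x y. C x y n z)"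
    by (intro ext ex_prod_decode_iff)
  ultimately have "ce_rel2 (\<lambda>n z. \<exists>x y. C x y n z)"
    by simp
  moreover have "(\<exists>x y. C x y n z) \<longleftrightarrow> z \<in> case_prod pair ` odd_loop_rel (\<lambda>x. \<exists>y. R n x y)"
    for n z
    unfolding image_pair_odd_loop_rel_iff C_def by blast
  ultimately show ?thesis
    unfolding computable_numbering_def by simp
qed

lemma many_one_reducible_interpolable:
  assumes std: "standard_numbering W"
    and bij: "bij (\<lambda>(i, j). pair i j)"
    and pair: "computable2 pair"
    and V: "\<And>n. V n = {(i, j). pair i j \<in> W n}"
    and Vt: "\<And>n. V (t n) = (V n)\<^sup>+"
    and B: "Pi02 B"
  shows "many_one_reducible B {n. interpolable (V (t n))}"
proof -
  from B obtain R where "decidable3 R \<and> (\<forall>n. n \<in> B \<longleftrightarrow> (\<forall>x. \<exists>y. R n x y))"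
    unfolding Pi02_def ..
  then have R: "decidable3 R" and BR: "\<And>n. n \<in> B \<longleftrightarrow> (\<forall>x. \<exists>y. R n x y)"
    by simp_all
  define Q where "Q n = odd_loop_rel (\<lambda>x. \<exists>y. R n x y)" for n
  have "\<forall>U. computable_numbering U \<longrightarrow> (\<exists>f. computable1 f \<and> (\<forall>n. U n = W (f n)))"
    using std unfolding standard_numbering_def by simp
  from this[rule_format, OF computable_numbering_odd_loop_rel[OF R pair]]
  obtain f where "computable1 f \<and> (\<forall>n. case_prod pair ` Q n = W (f n))"
    unfolding Q_def ..
  then have f: "computable1 f" and Wf: "\<And>n. W (f n) = case_prod pair ` Q n"
    by simp_all
  have "V (f n) = Q n" for n
  proof -
    have "(i, j) \<in> V (f n) \<longleftrightarrow> (i, j) \<in> Q n" for i j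
      using inj_image_mem_iff[OF bij_is_inj[OF bij], of "(i, j)" "Q n"] by (simp add: V Wf)
    then show ?thesis by auto
  qed
  then have "V (t (f n)) = Q n" for n
    using Vt trancl_id[OF trans_odd_loop_rel] unfolding Q_def by simp
  then have "n \<in> B \<longleftrightarrow> f n \<in> {n. interpolable (V (t n))}" for n
    using BR interpolable_odd_loop_rel_iff unfolding Q_def by simp
  then show ?thesis
    unfolding many_one_reducible_def using f by blast
qed

lemma uniformly_ce_stages:
  assumes W: "computable_numbering W"
    and pair: "computable2 pair"
    and V: "\<And>n. V n = {(i, j). pair i j \<in> W n}"
    and t: "computable1 t"
  obtains S where
    "\<And>k M A B C. rec_total k M \<Longrightarrow> rec_total k A \<Longrightarrow> rec_total k B \<Longrightarrow> rec_total k C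
      \<Longrightarrow> rec_decidable k (\<lambda>zs. S (M zs) (A zs) (B zs) (C zs))"
    and "\<And>m p q. (p, q) \<in> V (t m) \<longleftrightarrow> (\<exists>s. S m s p q)"
    and "\<And>m s s' p q. S m s p q \<Longrightarrow> s \<le> s' \<Longrightarrow> S m s' p q"
proof -
  obtain H where H: "rec_decidable 3 H" and W_H: "\<And>n x. x \<in> W n \<longleftrightarrow> (\<exists>s. H [s, n, x])"
    and mono: "\<And>s s' n x. H [s, n, x] \<Longrightarrow> s \<le> s' \<Longrightarrow> H [s', n, x]"
    using ce_rel2_stages[OF W[unfolded computable_numbering_def]] by blast
  define S where "S m s p q \<longleftrightarrow> H [s, t m, pair p q]" for m s p q
  have "rec_decidable k (\<lambda>zs. S (M zs) (A zs) (B zs) (C zs))"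
    if "rec_total k M" "rec_total k A" "rec_total k B" "rec_total k C" for k M A B C
  proof -
    have "rec_decidable (Suc (Suc (Suc 0))) H"
      using H by (simp add: numeral_3_eq_3)
    moreover have "rec_total_list k (Suc (Suc (Suc 0))) (\<lambda>zs. [A zs, t (M zs), pair (B zs) (C zs)])"
      by (intro rec_total_list_Cons rec_total_list_Nil that rec_total_computable1[OF t]
          rec_total_computable2[OF pair])
    ultimately show ?thesis
      unfolding S_def by (rule rec_decidable_comp_list)
  qed
  moreover have "(p, q) \<in> V (t m) \<longleftrightarrow> (\<exists>s. S m s p q)" for m p q
    by (simp add: V W_H S_def)
  moreover have "S m s' p q" if "S m s p q" "s \<le> s'" for m s s' p q
    using mono that unfolding S_def .
  ultimately show ?thesis
    by (rule that)
qed

lemma Pi02_interpolable: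
  assumes "computable_numbering W"
    and "computable2 pair"
    and "\<And>n. V n = {(i, j). pair i j \<in> W n}"
    and "computable1 t"
  shows "Pi02 {n. interpolable (V (t n))}"
proof -
  obtain S where S_dec: "\<And>k M A B C. rec_total k M \<Longrightarrow> rec_total k A \<Longrightarrow> rec_total k B
      \<Longrightarrow> rec_total k C \<Longrightarrow> rec_decidable k (\<lambda>zs. S (M zs) (A zs) (B zs) (C zs))"
    and mem: "\<And>m p q. (p, q) \<in> V (t m) \<longleftrightarrow> (\<exists>s. S m s p q)"
    and mono: "\<And>m s s' p q. S m s p q \<Longrightarrow> s \<le> s' \<Longrightarrow> S m s' p q"
    using uniformly_ce_stages[OF assms] by blast
  define \<Phi> where "\<Phi> m y a b s x c s' \<longleftrightarrow> S m s' x y \<and>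
    (S m s a y \<and> S m s b y \<longrightarrow> S m s' c y \<and> S m s' a c \<and> S m s' b c)" for m y a b s x c s'
  define \<pi>\<^sub>1 where "\<pi>\<^sub>1 u = fst (prod_decode u)" for u
  define \<pi>\<^sub>2 where "\<pi>\<^sub>2 u = snd (prod_decode u)" for u
  define \<Psi> where "\<Psi> m u w \<longleftrightarrow> \<Phi> m (\<pi>\<^sub>1 u) (\<pi>\<^sub>1 (\<pi>\<^sub>2 u)) (\<pi>\<^sub>1 (\<pi>\<^sub>2 (\<pi>\<^sub>2 u))) (\<pi>\<^sub>2 (\<pi>\<^sub>2 (\<pi>\<^sub>2 u)))
    (\<pi>\<^sub>1 w) (\<pi>\<^sub>1 (\<pi>\<^sub>2 w)) (\<pi>\<^sub>2 (\<pi>\<^sub>2 w))" for m u w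
  have "rec_decidable 3 (\<lambda>zs. \<Psi> (zs ! 0) (zs ! 1) (zs ! 2))"
    unfolding \<Psi>_def \<Phi>_def \<pi>\<^sub>1_def \<pi>\<^sub>2_def
    by (intro rec_decidable_conj rec_decidable_imp S_dec rec_total_fst_prod_decode
        rec_total_snd_prod_decode rec_total_proj) auto
  moreover have "interpolable (V (t m)) \<longleftrightarrow> (\<forall>u. \<exists>w. \<Psi> m u w)" for m
  proof -
    have "interpolable (V (t m)) \<longleftrightarrow> (\<forall>y a b s. \<exists>x c s'. \<Phi> m y a b s x c s')"
      unfolding \<Phi>_def using mem mono by (rule interpolable_iff_stages)
    also have "\<dots> \<longleftrightarrow> (\<forall>u. \<exists>w. \<Psi> m u w)"
      unfolding \<Psi>_def \<pi>\<^sub>1_def \<pi>\<^sub>2_def by (rule all_ex_prod_decode_iff)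
    finally show ?thesis .
  qed
  ultimately show ?thesis
    by (intro Pi02_intro) auto
qed

theorem proposition18:
  fixes W :: "nat \<Rightarrow> nat set"
    and pair :: "nat \<Rightarrow> nat \<Rightarrow> nat"
    and V :: "nat \<Rightarrow> (nat \<times> nat) set"
    and t :: "nat \<Rightarrow> nat"
  assumes "standard_numbering W"
    and "bij (\<lambda>(i, j). pair i j)"
    and "computable2 pair"
    and "\<And>n. V n = {(i, j). pair i j \<in> W n}"
    and "computable1 t"
    and "\<And>n. V (t n) = (V n)\<^sup>+"
  shows "Pi02_complete {n. interpolable (V (t n))}"
proof -
  have "computable_numbering W"
    using assms(1) unfolding standard_numbering_def by blast
  then have "Pi02 {n. interpolable (V (t n))}"
    using assms(3-5) by (rule Pi02_interpolable)
  moreover have "many_one_reducible B {n. interpolable (V (t n))}" if "Pi02 B" for B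
    using assms(1-4,6) that by (rule many_one_reducible_interpolable)
  ultimately show ?thesis
    unfolding Pi02_complete_def by blast
qed

end
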